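(* Let $u$ be a finite game with player set $\mathcal V$ and strategy profile space $\mathcal X$, and let $x^*\in\mathcal X$ be a Nash equilibrium of $u$. Then for every nonempty subset of players $\mathcal R\subseteq\mathcal V$, the projection $x^*_{\mathcal R}$ is a Nash equilibrium of every game $\tilde u\in\mathcal U_{\mathcal R}$ such that $$\|u-\tilde u\|_\infty\le\mu_u(x^* ).$$
   Context: A finite game consists of a finite nonempty player set $\mathcal V$, finite nonempty action sets $\mathcal A_i$, profile space $\mathcal X=\prod_{i\in\mathcal V}\mathcal A_i$, and utilities $u_i:\mathcal X\to\mathbb R$; $\mathcal U$ is the space of all such games, normed by $\|\delta\|_\infty=\max_{i\in\mathcal V}\max_{x\in\mathcal X}|\delta_i(x)|$. Profiles $x,y$ are $i$-comparable, $x\sim_i y$, if they coincide except possibly in entry $i$; for a game $v$, $\chi^v_i(x)=\min_{y\sim_i x,\,y\neq x}\{v_i(x)-v_i(y)\}$, and a (pure strategy) Nash equilibrium of $v$ is a profile $x^*$ with $\chi^v_i(x^* )\ge0$ for every player $i$. The margin of robustness $\mu_u(x^* )$ of a Nash equilibrium $x^*$ of $u$ is the infimum of $\|\delta\|_\infty$ over perturbations $\delta\in\mathcal U$ such that $x^*$ is not a Nash equilibrium of $u+\delta$. For nonempty $\mathcal R\subseteq\mathcal V$, $\mathcal X_{\mathcal R}=\prod_{i\in\mathcal R}\mathcal A_i$, $x_{\mathcal R}$ denotes the restriction of $x\in\mathcal X$ to the coordinates in $\mathcal R$, and $\mathcal U_{\mathcal R}$ is the set of games with player set $\mathcal R$ and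 profile space $\mathcal X_{\mathcal R}$. For $u\in\mathcal U$ and $\tilde u\in\mathcal U_{\mathcal R}$, $\|u-\tilde u\|_\infty=\max_{i\in\mathcal R}\max_{x\in\mathcal X}|u_i(x)-\tilde u_i(x_{\mathcal R})|$. *)

theory Defs
  imports "HOL-Analysis.Analysis" "HOL-Library.Extended_Real"
begin

text \<open>Profiles are extensional functions in PiE V A; utilities are functions
  u :: player => profile => real (only values for i in V, x in PiE V A matter).\<close>

definition finite_game :: "'p set \<Rightarrow> ('p \<Rightarrow> 'a set) \<Rightarrow> bool" where
  "finite_game V A \<longleftrightarrow> finite V \<and> V \<noteq> {} \<and> (\<forall>i\<in>V. finite (A i) \<and> A i \<noteq> {})"

definition comparable :: "'p \<Rightarrow> ('p \<Rightarrow> 'a) \<Rightarrow> ('p \<Rightarrow> 'a) \<Rightarrow> bool" where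
  "comparable i x y \<longleftrightarrow> (\<forall>j. j \<noteq> i \<longrightarrow> x j = y j)"

text \<open>Pure Nash equilibrium: chi_i(x) >= 0 for all players, where chi_i(x) is the
  minimum of v_i(x) - v_i(y) over i-comparable y different from x (a minimum over
  the empty set imposing no constraint).\<close>
definition nash_eq :: "'p set \<Rightarrow> ('p \<Rightarrow> 'a set) \<Rightarrow> ('p \<Rightarrow> ('p \<Rightarrow> 'a) \<Rightarrow> real) \<Rightarrow> ('p \<Rightarrow> 'a) \<Rightarrow> bool" where
  "nash_eq V A v x \<longleftrightarrow> x \<in> PiE V A \<and>
     (\<forall>i\<in>V. \<forall>y\<in>PiE V A. comparable i x y \<and> y \<noteq> x \<longrightarrow> v i x - v i y \<ge> 0)"

definition game_norm :: "'p set \<Rightarrow> ('p \<Rightarrow> 'a set) \<Rightarrow> ('p \<Rightarrow> ('p \<Rightarrow> 'a) \<Rightarrow> real) \<Rightarrow> real" where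
  "game_norm V A d = Max {\<bar>d i x\<bar> | i x. i \<in> V \<and> x \<in> PiE V A}"

text \<open>Margin of robustness (in the extended reals; infimum of the empty set is +infinity).\<close>
definition margin :: "'p set \<Rightarrow> ('p \<Rightarrow> 'a set) \<Rightarrow> ('p \<Rightarrow> ('p \<Rightarrow> 'a) \<Rightarrow> real) \<Rightarrow> ('p \<Rightarrow> 'a) \<Rightarrow> ereal" where
  "margin V A u x = Inf {ereal (game_norm V A d) | d.
       \<not> nash_eq V A (\<lambda>i y. u i y + d i y) x}"

definition sub_dist :: "'p set \<Rightarrow> ('p \<Rightarrow> 'a set) \<Rightarrow> 'p set \<Rightarrow> ('p \<Rightarrow> ('p \<Rightarrow> 'a) \<Rightarrow> real)
    \<Rightarrow> ('p \<Rightarrow> ('p \<Rightarrow> 'a) \<Rightarrow> real) \<Rightarrow> real" where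
  "sub_dist V A R u ut = Max {\<bar>u i x - ut i (restrict x R)\<bar> | i x. i \<in> R \<and> x \<in> PiE V A}"

end

theory Submission
  imports Defs
begin

text \<open>If a perturbation \<open>d\<close> destroys the equilibrium \<open>x\<close>, then the gain of some deviation
  is affine in the scaling \<open>t\<close> of \<open>d\<close>, nonnegative at \<open>t = 0\<close> and negative at \<open>t = 1\<close>;
  hence it is already negative for some \<open>t < 1\<close>, and the margin is strictly smaller than
  the norm of \<open>d\<close>. So every perturbation of norm at most the margin preserves the equilibrium.
  A game \<open>ut\<close> on the players \<open>R\<close> is the perturbation of \<open>u\<close> by \<open>ut\<^sub>i(x\<^sub>R) - u\<^sub>i(x)\<close>
  for \<open>i \<in> R\<close> (and \<open>0\<close> otherwise), whose norm is at most the distance of \<open>u\<close> and \<open>ut\<close>; unilateral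
  deviations in the game on \<open>R\<close> are exactly the deviations of players of \<open>R\<close> in the lifted game.\<close>

lemma finite_game_finite_PiE:
  assumes "finite_game V A"
  shows "finite (PiE V A)"
  using assms unfolding finite_game_def by (intro finite_PiE) auto

lemma finite_game_PiE_nonempty:
  assumes "finite_game V A"
  shows "PiE V A \<noteq> {}"
  using assms unfolding finite_game_def by (simp add: PiE_eq_empty_iff)

lemma finite_game_finite_values:
  assumes "finite_game V A" "R \<subseteq> V"
  shows "finite {f i x | i x. i \<in> R \<and> x \<in> PiE V A}"
proof -
  have "{f i x | i x. i \<in> R \<and> x \<in> PiE V A} = (\<lambda>(i, x). f i x) ` (R \<times> PiE V A)"
    by auto
  moreover have "finite R"
    using assms finite_subset unfolding finite_game_def by blast
  ultimately show ?thesis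
    using finite_game_finite_PiE[OF assms(1)] by simp
qed

lemma abs_le_game_norm:
  assumes "finite_game V A" "i \<in> V" "x \<in> PiE V A"
  shows "\<bar>d i x\<bar> \<le> game_norm V A d"
  unfolding game_norm_def
  using assms finite_game_finite_values[OF assms(1), of V "\<lambda>i x. \<bar>d i x\<bar>"]
  by (intro Max_ge) auto

lemma game_norm_le:
  assumes "finite_game V A" "\<And>i x. i \<in> V \<Longrightarrow> x \<in> PiE V A \<Longrightarrow> \<bar>d i x\<bar> \<le> K"
  shows "game_norm V A d \<le> K"
proof -
  obtain x where "x \<in> PiE V A"
    using finite_game_PiE_nonempty[OF assms(1)] by blast
  moreover obtain i where "i \<in> V"
    using assms(1) unfolding finite_game_def by auto
  ultimately show ?thesis
    unfolding game_norm_def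
    using assms finite_game_finite_values[OF assms(1), of V "\<lambda>i x. \<bar>d i x\<bar>"]
    by (subst Max_le_iff) auto
qed

lemma abs_le_sub_dist:
  assumes "finite_game V A" "R \<subseteq> V" "i \<in> R" "x \<in> PiE V A"
  shows "\<bar>u i x - ut i (restrict x R)\<bar> \<le> sub_dist V A R u ut"
  unfolding sub_dist_def
  using assms finite_game_finite_values[OF assms(1,2), of "\<lambda>i x. \<bar>u i x - ut i (restrict x R)\<bar>"]
  by (intro Max_ge) auto

lemma nash_eq_cong:
  assumes "\<And>i y. i \<in> V \<Longrightarrow> y \<in> PiE V A \<Longrightarrow> v i y = w i y"
  shows "nash_eq V A v x \<longleftrightarrow> nash_eq V A w x"
  using assms unfolding nash_eq_def by auto

lemma not_nash_eq_scaled_perturbation: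
  assumes "nash_eq V A u x" "\<not> nash_eq V A (\<lambda>i y. u i y + d i y) x"
  obtains t :: real where "0 \<le> t" "t < 1" "\<not> nash_eq V A (\<lambda>i y. u i y + t * d i y) x"
proof -
  have "x \<in> PiE V A"
    using assms(1) unfolding nash_eq_def by simp
  then obtain i y where iy: "i \<in> V" "y \<in> PiE V A" "comparable i x y" "y \<noteq> x"
    and "u i x + d i x - (u i y + d i y) < 0"
    using assms(2) unfolding nash_eq_def by (meson not_le)
  moreover define a b where "a = u i x - u i y" and "b = d i x - d i y"
  ultimately have "a + b < 0"
    by simp
  moreover have "a \<ge> 0"
    using assms(1) iy unfolding nash_eq_def a_def by auto
  ultimately have "b < 0" "0 \<le> a / - b" "a / - b < 1"
    by (auto simp: divide_simps)
  define t where "t = (1 + a / - b) / 2"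
  have "a / - b < t"
    using \<open>a / - b < 1\<close> unfolding t_def by simp
  then have "a + t * b < 0"
    using \<open>b < 0\<close> by (simp add: divide_simps)
  then have "\<not> nash_eq V A (\<lambda>i y. u i y + t * d i y) x"
    using iy unfolding nash_eq_def a_def b_def by (force simp: algebra_simps)
  moreover have "0 \<le> t" "t < 1"
    using \<open>0 \<le> a / - b\<close> \<open>a / - b < 1\<close> unfolding t_def by auto
  ultimately show thesis
    using that by blast
qed

lemma margin_less_game_norm:
  assumes fg: "finite_game V A" and eq: "nash_eq V A u x"
    and not_eq: "\<not> nash_eq V A (\<lambda>i y. u i y + d i y) x"
  shows "margin V A u x < ereal (game_norm V A d)"
proof -
  obtain t :: real where t: "0 \<le> t" "t < 1"
    and not_eq_t: "\<not> nash_eq V A (\<lambda>i y. u i y + t * d i y) x"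
    using not_nash_eq_scaled_perturbation[OF eq not_eq] .
  have "game_norm V A d > 0"
  proof (rule ccontr)
    assume "\<not> game_norm V A d > 0"
    then have "d i y = 0" if "i \<in> V" "y \<in> PiE V A" for i y
      using abs_le_game_norm[OF fg that, of d] by simp
    then show False
      using eq not_eq nash_eq_cong[of V A "\<lambda>i y. u i y + d i y" u] by auto
  qed
  have "margin V A u x \<le> ereal (game_norm V A (\<lambda>i y. t * d i y))"
    unfolding margin_def using not_eq_t by (intro Inf_lower) blast
  also have "game_norm V A (\<lambda>i y. t * d i y) \<le> t * game_norm V A d"
    using abs_le_game_norm[OF fg] t
    by (intro game_norm_le[OF fg]) (simp add: abs_mult mult_left_mono)
  also have "t * game_norm V A d < game_norm V A d"
    using t \<open>game_norm V A d > 0\<close> by simp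
  finally show ?thesis
    by simp
qed

corollary nash_eq_perturbation_within_margin:
  assumes "finite_game V A" "nash_eq V A u x"
    and "ereal (game_norm V A d) \<le> margin V A u x"
  shows "nash_eq V A (\<lambda>i y. u i y + d i y) x"
  using margin_less_game_norm[OF assms(1,2), of d] assms(3) by fastforce

lemma nash_eq_restrict:
  assumes eq: "nash_eq V A v x" and "R \<subseteq> V"
    and agree: "\<And>i y. i \<in> R \<Longrightarrow> y \<in> PiE V A \<Longrightarrow> v i y = w i (restrict y R)"
  shows "nash_eq R A w (restrict x R)"
  unfolding nash_eq_def
proof (intro conjI ballI impI)
  have x: "x \<in> PiE V A"
    using eq unfolding nash_eq_def by simp
  then show "restrict x R \<in> PiE R A"
    using \<open>R \<subseteq> V\<close> by auto
  fix i y
  assume i: "i \<in> R" and y: "y \<in> PiE R A"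
    and dev: "comparable i (restrict x R) y \<and> y \<noteq> restrict x R"
  define y' where "y' = (\<lambda>j. if j \<in> R then y j else x j)"
  have y': "y' \<in> PiE V A" "restrict y' R = y"
    using x y \<open>R \<subseteq> V\<close> unfolding y'_def by (auto simp: PiE_def Pi_def extensional_def)
  moreover have "comparable i x y'"
    using dev unfolding comparable_def y'_def by (metis restrict_apply')
  moreover have "y' \<noteq> x"
    using dev y'(2) by auto
  ultimately have "v i x - v i y' \<ge> 0"
    using eq i \<open>R \<subseteq> V\<close> unfolding nash_eq_def by blast
  then show "w i (restrict x R) - w i y \<ge> 0"
    using agree[OF i x] agree[OF i y'(1)] y'(2) by simp
qed

theorem proposition3:
  fixes V R :: "'p set" and A :: "'p \<Rightarrow> 'a set"
    and u ut :: "'p \<Rightarrow> ('p \<Rightarrow> 'a) \<Rightarrow> real" and xs :: "'p \<Rightarrow> 'a"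
  assumes "finite_game V A"
    and "nash_eq V A u xs"
    and "R \<subseteq> V" and "R \<noteq> {}"
    and "ereal (sub_dist V A R u ut) \<le> margin V A u xs"
  shows "nash_eq R A ut (restrict xs R)"
proof -
  define d where "d = (\<lambda>i x. if i \<in> R then ut i (restrict x R) - u i x else 0)"
  obtain i x where "i \<in> R" "x \<in> PiE V A"
    using \<open>R \<noteq> {}\<close> finite_game_PiE_nonempty[OF assms(1)] by blast
  then have "0 \<le> sub_dist V A R u ut"
    using abs_le_sub_dist[OF assms(1,3)] by (meson abs_ge_zero order_trans)
  then have "game_norm V A d \<le> sub_dist V A R u ut"
    using abs_le_sub_dist[OF assms(1,3)]
    by (intro game_norm_le[OF assms(1)]) (simp add: d_def abs_minus_commute)
  then have "ereal (game_norm V A d) \<le> margin V A u xs"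
    using assms(5) by (metis ereal_less_eq(3) order_trans)
  then have "nash_eq V A (\<lambda>i y. u i y + d i y) xs"
    by (rule nash_eq_perturbation_within_margin[OF assms(1,2)])
  then show ?thesis
    by (rule nash_eq_restrict[OF _ \<open>R \<subseteq> V\<close>]) (simp add: d_def)
qed

end
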